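(* Let $\mathcal{A}*\mathcal{X}=\mathcal{B}$ be a consistent tensor system with unique solution $\mathcal{X}^*$, where $\mathcal{A}\in\mathbb{R}^{n_1\times n_2\times n}$ and $\mathcal{B}\in\mathbb{R}^{n_1\times n_3\times n}$. Let $\alpha>0$ and $$\kappa=\max_{i=1,\dots,n}\|\mathcal{I}-\alpha\tilde{\mathcal{A}}_i^T*\tilde{\mathcal{A}}_i\|_{op},\qquad \mu=\max_{i,j\in\{1,\dots,n\},\,i\neq j}\|\tilde{\mathcal{A}}_i^T*\tilde{\mathcal{A}}_j\|_{op}.$$ If $\kappa+\alpha\mu(n-1)<1$, then the iterates $\mathcal{X}(t)$ of cyclic frontal slice descent (block size $1$) with learning rate $\alpha$ satisfy $\mathcal{E}(t)=\|\mathcal{X}(t)-\mathcal{X}^*\|_F^2\to 0$ as $t\to\infty$.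
   Context: For $\mathcal{A}\in\mathbb{R}^{n_1\times n_2\times n}$ with frontal slices $A_k=\mathcal{A}(:,:,k)$: $\mathrm{unfold}(\mathcal{A})$ stacks $A_1,\dots,A_n$ vertically, $\mathrm{fold}$ is its inverse, $\mathrm{bcirc}(\mathcal{A})$ is the $n_1n\times n_2n$ block-circulant matrix with $(p,q)$ block $A_{((p-q)\bmod n)+1}$, and the t-product is $\mathcal{A}*\mathcal{X}=\mathrm{fold}(\mathrm{bcirc}(\mathcal{A})\mathrm{unfold}(\mathcal{X}))$. The identity tensor $\mathcal{I}$ has first frontal slice equal to the identity matrix and all other frontal slices zero. The transpose $\mathcal{A}^T$ transposes each frontal slice and reverses the order of slices $2,\dots,n$. $\|\cdot\|_F$ is the entrywise Frobenius norm and $\|\mathcal{C}\|_{op}=\sup_{\|\mathcal{X}\|_F=1}\|\mathcal{C}*\mathcal{X}\|_F=\|\mathrm{bcirc}(\mathcal{C})\|_2$. For $k\in\{1,\dots,n\}$, $\tilde{\mathcal{A}}_k\in\mathbb{R}^{n_1\times n_2\times n}$ has $k$-th frontal slice $A_k$ and all other frontal slices zero. Cyclic frontal slice descent with learning rate $\alpha$: set $\mathcal{X}(t)=0$ for all $t\le 0$; for $t=0,1,2,\dots$ let $\mathcal{R}(t+1)=\mathcal{B}-\sum_{j=0}^{n-1}\tilde{\mathcal{A}}_{((t-j)\bmod n)+1}*\mathcal{X}(t-j)$ and $\mathcal{X}(t+1)=\mathcal{X}(t)+\alpha\,\tilde{\mathcal{A}}_{(t\bmod n)+1}^T*\mathcal{R}(t+1)$.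 *)

theory Defs
  imports Complex_Main
begin

text \<open>Third-order real tensors are represented as functions T i j k (0-based
row i, column j, frontal slice k). A tensor of size d1 x d2 x d3 is such a
function, of which only the entries with i < d1, j < d2, k < d3 matter; all
operations below only read entries inside these bounds.\<close>

type_synonym tensor = "nat \<Rightarrow> nat \<Rightarrow> nat \<Rightarrow> real"

definition tzero :: tensor where
  "tzero = (\<lambda>i j k. 0)"

definition tadd :: "tensor \<Rightarrow> tensor \<Rightarrow> tensor" where
  "tadd X Y = (\<lambda>i j k. X i j k + Y i j k)"

definition tsub :: "tensor \<Rightarrow> tensor \<Rightarrow> tensor" where
  "tsub X Y = (\<lambda>i j k. X i j k - Y i j k)"

definition tscale :: "real \<Rightarrow> tensor \<Rightarrow> tensor" where
  "tscale c X = (\<lambda>i j k. c * X i j k)"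

text \<open>t-product fold(bcirc(A) unfold(X)) for A of size d1 x m x n and X of size
m x d3 x n: the p-th frontal slice (0-based) is sum over q of A_{(p-q) mod n} X_q.\<close>
definition tprod :: "nat \<Rightarrow> nat \<Rightarrow> tensor \<Rightarrow> tensor \<Rightarrow> tensor" where
  "tprod m n A X = (\<lambda>i j p. \<Sum>q<n. \<Sum>r<m. A i r ((p + n - q) mod n) * X r j q)"

text \<open>Transpose: transpose each frontal slice, reverse slices 2..n (1-based).\<close>
definition ttrans :: "nat \<Rightarrow> tensor \<Rightarrow> tensor" where
  "ttrans n A = (\<lambda>i j k. A j i ((n - k) mod n))"

definition tident :: tensor where
  "tident = (\<lambda>i j k. if i = j \<and> k = 0 then 1 else 0)"

text \<open>The tensor keeping only frontal slice k (0-based), i.e. \<tilde>A_{k+1}.\<close>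
definition tslice :: "tensor \<Rightarrow> nat \<Rightarrow> tensor" where
  "tslice A k = (\<lambda>i j l. if l = k then A i j l else 0)"

definition frob :: "nat \<Rightarrow> nat \<Rightarrow> nat \<Rightarrow> tensor \<Rightarrow> real" where
  "frob d1 d2 d3 T = sqrt (\<Sum>i<d1. \<Sum>j<d2. \<Sum>k<d3. (T i j k)\<^sup>2)"

definition teq :: "nat \<Rightarrow> nat \<Rightarrow> nat \<Rightarrow> tensor \<Rightarrow> tensor \<Rightarrow> bool" where
  "teq d1 d2 d3 X Y = (\<forall>i<d1. \<forall>j<d2. \<forall>k<d3. X i j k = Y i j k)"

text \<open>Operator norm of C of size p x m x n: sup of frob(C * X) over X of size
m x 1 x n with frob X = 1; this is exactly the spectral norm of bcirc(C).\<close>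
definition topnorm :: "nat \<Rightarrow> nat \<Rightarrow> nat \<Rightarrow> tensor \<Rightarrow> real" where
  "topnorm p m n C = Sup {frob p 1 n (tprod m n C X) | X. frob m 1 n X = 1}"

end

theory Submission
  imports Defs "HOL-Analysis.L2_Norm"
begin

text \<open>Write E(t) = X(t) - X* and i = t mod n. Because B = A * X* and A is the sum of the
  slices \<tilde>A_((t-l) mod n) over l < n, one step of the method is the linear recursion
    E(t+1) = (I - \<alpha> \<tilde>A_i^T * \<tilde>A_i) * E(t) - \<alpha> \<Sum>_{l=1}^{n-1} \<tilde>A_i^T * \<tilde>A_((t-l) mod n) * E(t-l).
  Taking Frobenius norms gives e(t+1) \<le> \<kappa> e(t) + \<alpha>\<mu> \<Sum>_{l=1}^{n-1} e(t-l) for e = \<parallel>E\<parallel>_F.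
  If \<kappa> + \<alpha>\<mu>(n-1) \<le> \<gamma>^n with \<gamma> < 1, induction gives e(t) \<le> e(0) \<gamma>^t: all n values on the
  right-hand side are bounded by e(0) \<gamma>^(t+1-n).\<close>

lemma frob_eq_L2_set:
  "frob d1 d2 d3 T = L2_set (\<lambda>(i, j, k). T i j k) ({..<d1} \<times> {..<d2} \<times> {..<d3})"
  unfolding frob_def L2_set_def by (simp add: sum.cartesian_product case_prod_beta)

lemma frob_power2: "(frob d1 d2 d3 T)\<^sup>2 = (\<Sum>i<d1. \<Sum>j<d2. \<Sum>k<d3. (T i j k)\<^sup>2)"
  unfolding frob_def by (intro real_sqrt_pow2 sum_nonneg) auto

lemma frob_power2_columns: "(frob d1 d2 d3 T)\<^sup>2 = (\<Sum>j<d2. (frob d1 1 d3 (\<lambda>i _ k. T i j k))\<^sup>2)"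
  unfolding frob_power2 by (simp add: sum.swap[of _ "{..<d2}"])

lemma frob_nonneg: "0 \<le> frob d1 d2 d3 T"
  unfolding frob_def by (simp add: sum_nonneg)

lemma frob_cong:
  "(\<And>i j k. i < d1 \<Longrightarrow> j < d2 \<Longrightarrow> k < d3 \<Longrightarrow> S i j k = T i j k) \<Longrightarrow>
    frob d1 d2 d3 S = frob d1 d2 d3 T"
  unfolding frob_def by (intro arg_cong[where f = sqrt] sum.cong) auto

lemma frob_mono:
  "(\<And>i j k. i < d1 \<Longrightarrow> j < d2 \<Longrightarrow> k < d3 \<Longrightarrow> \<bar>S i j k\<bar> \<le> \<bar>T i j k\<bar>) \<Longrightarrow>
    frob d1 d2 d3 S \<le> frob d1 d2 d3 T"
  unfolding frob_def by (intro real_sqrt_le_mono sum_mono) (metis abs_ge_zero power2_abs power_mono lessThan_iff)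

lemma abs_entry_le_frob: "i < d1 \<Longrightarrow> j < d2 \<Longrightarrow> k < d3 \<Longrightarrow> \<bar>T i j k\<bar> \<le> frob d1 d2 d3 T"
  unfolding frob_eq_L2_set
  using member_le_L2_set[of "{..<d1} \<times> {..<d2} \<times> {..<d3}" "(i, j, k)" "\<lambda>(i, j, k). \<bar>T i j k\<bar>"]
  by (simp add: L2_set_def case_prod_beta)

lemma frob_scale: "frob d1 d2 d3 (\<lambda>i j k. c * T i j k) = \<bar>c\<bar> * frob d1 d2 d3 T"
  unfolding frob_eq_L2_set using L2_set_right_distrib[of "\<bar>c\<bar>" "\<lambda>(i, j, k). T i j k"]
  by (simp add: case_prod_beta abs_mult L2_set_def power_mult_distrib)

lemma frob_add_le: "frob d1 d2 d3 (\<lambda>i j k. S i j k + T i j k) \<le> frob d1 d2 d3 S + frob d1 d2 d3 T"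
  unfolding frob_eq_L2_set using L2_set_triangle_ineq[of "\<lambda>(i, j, k). S i j k" "\<lambda>(i, j, k). T i j k"]
  by (simp add: case_prod_beta split_def)

lemma frob_diff_le: "frob d1 d2 d3 (\<lambda>i j k. S i j k - T i j k) \<le> frob d1 d2 d3 S + frob d1 d2 d3 T"
  using frob_add_le[of d1 d2 d3 S "\<lambda>i j k. - T i j k"] frob_scale[of d1 d2 d3 "-1" T] by simp

lemma frob_sum_le:
  assumes "finite L"
  shows "frob d1 d2 d3 (\<lambda>i j k. \<Sum>l\<in>L. F l i j k) \<le> (\<Sum>l\<in>L. frob d1 d2 d3 (F l))"
  using assms
proof (induction L rule: finite_induct)
  case empty
  then show ?case by (simp add: frob_def)
next
  case (insert l L)
  then have "frob d1 d2 d3 (\<lambda>i j k. \<Sum>l\<in>insert l L. F l i j k)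
      \<le> frob d1 d2 d3 (F l) + frob d1 d2 d3 (\<lambda>i j k. \<Sum>l\<in>L. F l i j k)"
    using frob_add_le[of d1 d2 d3 "F l"] by simp
  with insert show ?case by simp
qed

lemma cyclic_diff_eq_int_mod:
  fixes p q n :: nat
  assumes "q < n"
  shows "int ((p + n - q) mod n) = (int p - int q) mod int n"
proof -
  have "int ((p + n - q) mod n) = (int p - int q + int n) mod int n"
    using assms by (simp add: zmod_int of_nat_diff algebra_simps)
  then show ?thesis by simp
qed

lemma cyclic_diff_add_cancel:
  fixes u q n :: nat
  assumes "u < n" "q < n"
  shows "((u + q) mod n + n - q) mod n = u"
proof -
  have "int (((u + q) mod n + n - q) mod n) = (int ((u + q) mod n) - int q) mod int n"
    using assms(2) by (rule cyclic_diff_eq_int_mod)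
  also have "\<dots> = int u"
    using assms(1) by (simp add: zmod_int mod_diff_left_eq)
  finally show ?thesis by simp
qed

lemma cyclic_add_diff_cancel:
  fixes v q n :: nat
  assumes "v < n" "q < n"
  shows "((v + n - q) mod n + q) mod n = v"
proof -
  have "int (((v + n - q) mod n + q) mod n) = (int ((v + n - q) mod n) + int q) mod int n"
    by (simp add: zmod_int)
  also have "\<dots> = int v"
    using assms by (simp add: cyclic_diff_eq_int_mod mod_add_left_eq)
  finally show ?thesis by simp
qed

lemma cyclic_diff_of_sum:
  fixes p u q n :: nat
  assumes "u < n" "q < n"
  shows "(p + n - (u + q) mod n) mod n = ((p + n - q) mod n + n - u) mod n"
proof -
  have "int ((p + n - (u + q) mod n) mod n) = (int p - int ((u + q) mod n)) mod int n"
    using assms by (intro cyclic_diff_eq_int_mod) simp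
  also have "\<dots> = (int p - int q - int u) mod int n"
    by (simp add: zmod_int mod_diff_right_eq algebra_simps)
  also have "\<dots> = int (((p + n - q) mod n + n - u) mod n)"
    using assms by (simp add: cyclic_diff_eq_int_mod mod_diff_left_eq)
  finally show ?thesis by simp
qed

lemma bij_betw_cyclic_shift: "(q::nat) < n \<Longrightarrow> bij_betw (\<lambda>u. (u + q) mod n) {..<n} {..<n}"
  by (rule bij_betw_byWitness[where f' = "\<lambda>v. (v + n - q) mod n"])
    (auto simp: cyclic_diff_add_cancel cyclic_add_diff_cancel)

lemma sum_cyclic_convolution_shift:
  fixes q n :: nat
  assumes "q < n"
  shows "(\<Sum>v<n. f ((p + n - v) mod n) * g ((v + n - q) mod n))
       = (\<Sum>u<n. f (((p + n - q) mod n + n - u) mod n) * g u)"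
proof -
  have "(\<Sum>v<n. f ((p + n - v) mod n) * g ((v + n - q) mod n))
      = (\<Sum>u<n. f ((p + n - (u + q) mod n) mod n) * g (((u + q) mod n + n - q) mod n))"
    using sum.reindex_bij_betw[OF bij_betw_cyclic_shift[OF assms],
        of "\<lambda>v. f ((p + n - v) mod n) * g ((v + n - q) mod n)"]
    by simp
  also have "\<dots> = (\<Sum>u<n. f (((p + n - q) mod n + n - u) mod n) * g u)"
    using assms by (intro sum.cong) (auto simp: cyclic_diff_add_cancel cyclic_diff_of_sum)
  finally show ?thesis .
qed

lemma sum_swap4:
  "(\<Sum>a\<in>A. \<Sum>b\<in>B. \<Sum>c\<in>C. \<Sum>d\<in>D. F a b c d) = (\<Sum>c\<in>C. \<Sum>d\<in>D. \<Sum>b\<in>B. \<Sum>a\<in>A. F a b c d)"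
  by (simp only: sum.swap[of _ A] sum.swap[of _ B C] sum.swap[of _ B D])

lemma tprod_assoc: "tprod k n C (tprod m n D E) = tprod m n (tprod k n C D) E"
proof (intro ext)
  fix i j p
  have "tprod k n C (tprod m n D E) i j p
      = (\<Sum>v<n. \<Sum>r<k. \<Sum>q<n. \<Sum>s<m. C i r ((p + n - v) mod n) * D r s ((v + n - q) mod n) * E s j q)"
    unfolding tprod_def by (simp add: sum_distrib_left mult.assoc)
  also have "\<dots> = (\<Sum>q<n. \<Sum>s<m. \<Sum>r<k. \<Sum>v<n. C i r ((p + n - v) mod n) * D r s ((v + n - q) mod n) * E s j q)"
    by (rule sum_swap4)
  also have "\<dots> = (\<Sum>q<n. \<Sum>s<m. (\<Sum>r<k. \<Sum>v<n. C i r ((p + n - v) mod n) * D r s ((v + n - q) mod n)) * E s j q)"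
    by (simp add: sum_distrib_right)
  also have "\<dots> = (\<Sum>q<n. \<Sum>s<m. (\<Sum>r<k. \<Sum>u<n. C i r (((p + n - q) mod n + n - u) mod n) * D r s u) * E s j q)"
    by (simp add: sum_cyclic_convolution_shift)
  also have "\<dots> = (\<Sum>q<n. \<Sum>s<m. (\<Sum>u<n. \<Sum>r<k. C i r (((p + n - q) mod n + n - u) mod n) * D r s u) * E s j q)"
    by (simp only: sum.swap[of _ "{..<k}"])
  also have "\<dots> = tprod m n (tprod k n C D) E i j p"
    unfolding tprod_def ..
  finally show "tprod k n C (tprod m n D E) i j p = tprod m n (tprod k n C D) E i j p" .
qed

lemma tprod_sum_left:
  "tprod m n (\<lambda>i r k. \<Sum>l\<in>L. F l i r k) X = (\<lambda>i j p. \<Sum>l\<in>L. tprod m n (F l) X i j p)"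
  unfolding tprod_def by (intro ext) (simp add: sum_distrib_right sum.swap[of _ L])

lemma tprod_sum_right:
  "tprod m n C (\<lambda>i j k. \<Sum>l\<in>L. F l i j k) = (\<lambda>i j p. \<Sum>l\<in>L. tprod m n C (F l) i j p)"
  unfolding tprod_def by (intro ext) (simp add: sum_distrib_left sum.swap[of _ L])

lemma tprod_diff_left: "tprod m n (tsub C D) X = tsub (tprod m n C X) (tprod m n D X)"
  unfolding tprod_def tsub_def by (intro ext) (simp add: algebra_simps sum_subtractf)

lemma tprod_diff_right: "tprod m n C (tsub X Y) = tsub (tprod m n C X) (tprod m n C Y)"
  unfolding tprod_def tsub_def by (intro ext) (simp add: algebra_simps sum_subtractf)

lemma tprod_scale_left: "tprod m n (tscale c C) X = tscale c (tprod m n C X)"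
  unfolding tprod_def tscale_def by (intro ext) (simp add: algebra_simps sum_distrib_left)

lemma tprod_scale_right: "tprod m n C (tscale c X) = tscale c (tprod m n C X)"
  unfolding tprod_def tscale_def by (intro ext) (simp add: algebra_simps sum_distrib_left)

lemma tprod_cong_left:
  "(\<And>r k. r < m \<Longrightarrow> k < n \<Longrightarrow> C i r k = D i r k) \<Longrightarrow> tprod m n C X i j p = tprod m n D X i j p"
  unfolding tprod_def by (intro sum.cong refl) auto

lemma tprod_cong_right:
  "(\<And>r q. r < m \<Longrightarrow> q < n \<Longrightarrow> X r j q = Y r j q) \<Longrightarrow> tprod m n C X i j p = tprod m n C Y i j p"
  unfolding tprod_def by (intro sum.cong refl) auto

lemma tprod_tident_left:
  assumes "i < m" "p < n"
  shows "tprod m n tident X i j p = X i j p"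
proof -
  have "(p + n - q) mod n = 0 \<longleftrightarrow> q = p" if "q < n" for q
    using assms that by (cases "q \<le> p") (auto simp: le_mod_geq)
  then have "tprod m n tident X i j p = (\<Sum>q<n. if q = p then X i j q else 0)"
    unfolding tprod_def tident_def using assms by (intro sum.cong) (auto simp: if_distrib[of "\<lambda>x. x * _"] cong: if_cong)
  with assms show ?thesis by simp
qed

lemma frob_tprod_unit_le:
  assumes "frob m 1 n X = 1"
  shows "frob p 1 n (tprod m n C X) \<le> (\<Sum>q<n. \<Sum>r<m. frob p 1 n (\<lambda>i j k. C i r ((k + n - q) mod n)))"
proof -
  have "frob p 1 n (tprod m n C X)
      \<le> (\<Sum>q<n. frob p 1 n (\<lambda>i j k. \<Sum>r<m. C i r ((k + n - q) mod n) * X r j q))"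
    unfolding tprod_def by (rule frob_sum_le) simp
  also have "\<dots> \<le> (\<Sum>q<n. \<Sum>r<m. frob p 1 n (\<lambda>i j k. C i r ((k + n - q) mod n) * X r j q))"
    by (intro sum_mono frob_sum_le) simp
  also have "\<dots> \<le> (\<Sum>q<n. \<Sum>r<m. frob p 1 n (\<lambda>i j k. C i r ((k + n - q) mod n)))"
  proof (intro sum_mono frob_mono)
    fix q r i j k assume "q \<in> {..<n}" "r \<in> {..<m}" "(j::nat) < 1"
    then have "\<bar>X r j q\<bar> \<le> 1"
      using abs_entry_le_frob[of r m j 1 q n X] assms by simp
    then show "\<bar>C i r ((k + n - q) mod n) * X r j q\<bar> \<le> \<bar>C i r ((k + n - q) mod n)\<bar>"
      by (simp add: abs_mult mult_left_le)
  qed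
  finally show ?thesis .
qed

lemma bdd_above_topnorm: "bdd_above {frob p 1 n (tprod m n C X) | X. frob m 1 n X = 1}"
  unfolding bdd_above_def using frob_tprod_unit_le by blast

lemma le_topnorm: "frob m 1 n X = 1 \<Longrightarrow> frob p 1 n (tprod m n C X) \<le> topnorm p m n C"
  unfolding topnorm_def by (rule cSup_upper[OF _ bdd_above_topnorm]) blast

lemma topnorm_nonneg:
  assumes "m \<ge> 1" "n \<ge> 1"
  shows "0 \<le> topnorm p m n C"
proof -
  define U :: tensor where "U = (\<lambda>r j q. if r = 0 \<and> q = 0 then 1 else 0)"
  have "(\<Sum>r<m. \<Sum>j<1::nat. \<Sum>q<n. (U r j q)\<^sup>2) = (\<Sum>r<m. if r = 0 then 1 else 0)"
    using assms unfolding U_def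
    by (intro sum.cong refl) (auto simp: power2_eq_square if_distrib[of "\<lambda>x. x * _"] cong: if_cong)
  also have "\<dots> = 1"
    using assms by simp
  finally have "frob m 1 n U = 1"
    unfolding frob_def by simp
  then show ?thesis
    using le_topnorm[of m n U p C] frob_nonneg[of p 1 n "tprod m n C U"] by linarith
qed

lemma frob_tprod_le_topnorm_column: "frob p 1 n (tprod m n C X) \<le> topnorm p m n C * frob m 1 n X"
proof (cases "frob m 1 n X = 0")
  case True
  then have "X r 0 q = 0" if "r < m" "q < n" for r q
    using abs_entry_le_frob[of r m 0 1 q n X] that by simp
  then have "frob p 1 n (tprod m n C X) = frob p 1 n (tprod m n C tzero)"
    by (intro frob_cong tprod_cong_right) (auto simp: tzero_def)
  with True show ?thesis
    by (simp add: frob_def tprod_def tzero_def)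
next
  case False
  define f where "f = frob m 1 n X"
  have "f > 0"
    using False frob_nonneg[of m 1 n X] unfolding f_def by simp
  have "frob m 1 n (tscale (1 / f) X) = 1"
    unfolding tscale_def frob_scale using \<open>f > 0\<close> f_def by simp
  then have "frob p 1 n (tprod m n C (tscale (1 / f) X)) \<le> topnorm p m n C"
    by (rule le_topnorm)
  also have "frob p 1 n (tprod m n C (tscale (1 / f) X)) = frob p 1 n (tprod m n C X) / f"
    unfolding tprod_scale_right unfolding tscale_def frob_scale using \<open>f > 0\<close> by simp
  finally show ?thesis
    using \<open>f > 0\<close> unfolding f_def by (simp add: divide_le_eq mult.commute)
qed

text \<open>The operator norm is defined through single-column tensors; the bound extends to
  d columns because the squared Frobenius norm is the sum of the squared column norms.\<close>

lemma frob_tprod_le_topnorm: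
  assumes "m \<ge> 1" "n \<ge> 1"
  shows "frob p d n (tprod m n C E) \<le> topnorm p m n C * frob m d n E"
proof -
  let ?op = "topnorm p m n C"
  have "(frob p d n (tprod m n C E))\<^sup>2 = (\<Sum>j<d. (frob p 1 n (tprod m n C (\<lambda>r _ q. E r j q)))\<^sup>2)"
    unfolding frob_power2_columns[of p d n] by (simp add: tprod_def)
  also have "\<dots> \<le> (\<Sum>j<d. (?op * frob m 1 n (\<lambda>r _ q. E r j q))\<^sup>2)"
    by (intro sum_mono power_mono frob_tprod_le_topnorm_column frob_nonneg)
  also have "\<dots> = (?op * frob m d n E)\<^sup>2"
    unfolding power_mult_distrib frob_power2_columns[of m d n E] by (simp add: sum_distrib_left)
  finally show ?thesis
    by (rule power2_le_imp_le[OF _ mult_nonneg_nonneg[OF topnorm_nonneg[OF assms] frob_nonneg]])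
qed

lemma delayed_recursion_geometric_bound:
  fixes e :: "int \<Rightarrow> real"
  assumes "n \<ge> 1" "0 \<le> \<kappa>" "0 \<le> \<beta>" "0 \<le> c" "0 < \<gamma>" "\<gamma> \<le> 1"
    and rate: "\<kappa> + \<beta> * real (n - 1) \<le> \<gamma> ^ n"
    and init: "\<And>t. t \<le> 0 \<Longrightarrow> e t \<le> c"
    and rec: "\<And>t. t \<ge> 0 \<Longrightarrow> e (t + 1) \<le> \<kappa> * e t + \<beta> * (\<Sum>l\<in>{1..<n}. e (t - int l))"
  shows "e s \<le> c * \<gamma> ^ nat s"
proof (induction "nat s" arbitrary: s rule: less_induct)
  case less
  show ?case
  proof (cases "s \<le> 0")
    case True
    then show ?thesis using init by simp
  next
    case False
    define t where "t = s - 1"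
    define N where "N = nat (s - int n)"
    have lag: "e (t - int l) \<le> c * \<gamma> ^ N" if "l < n" for l
    proof -
      have "e (t - int l) \<le> c * \<gamma> ^ nat (t - int l)"
        using False by (intro less.hyps) (auto simp: t_def)
      also have "\<dots> \<le> c * \<gamma> ^ N"
        using that assms(4-6) by (intro mult_left_mono power_decreasing) (auto simp: N_def t_def)
      finally show ?thesis .
    qed
    have "e s \<le> \<kappa> * e t + \<beta> * (\<Sum>l\<in>{1..<n}. e (t - int l))"
      using rec[of t] False by (simp add: t_def)
    also have "\<dots> \<le> \<kappa> * (c * \<gamma> ^ N) + \<beta> * (\<Sum>l\<in>{1..<n}. c * \<gamma> ^ N)"
      using lag[of 0] lag assms(1-3) by (intro add_mono mult_left_mono sum_mono) auto
    also have "\<dots> = (\<kappa> + \<beta> * real (n - 1)) * (c * \<gamma> ^ N)"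
      by (simp add: algebra_simps)
    also have "\<dots> \<le> c * \<gamma> ^ (N + n)"
      using mult_right_mono[OF rate, of "c * \<gamma> ^ N"] assms(4,5) by (simp add: power_add algebra_simps)
    also have "\<dots> \<le> c * \<gamma> ^ nat s"
      using assms(4-6) by (intro mult_left_mono power_decreasing) (auto simp: N_def)
    finally show ?thesis .
  qed
qed

lemma delayed_recursion_tendsto_zero:
  fixes e :: "int \<Rightarrow> real"
  assumes "n \<ge> 1" "0 \<le> \<kappa>" "0 \<le> \<beta>" and rate: "\<kappa> + \<beta> * real (n - 1) < 1"
    and nonneg: "\<And>t. 0 \<le> e t"
    and init: "\<And>t. t \<le> 0 \<Longrightarrow> e t \<le> c"
    and rec: "\<And>t. t \<ge> 0 \<Longrightarrow> e (t + 1) \<le> \<kappa> * e t + \<beta> * (\<Sum>l\<in>{1..<n}. e (t - int l))"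
  shows "(\<lambda>k. e (int k)) \<longlonglongrightarrow> 0"
proof -
  define \<gamma> where "\<gamma> = root n (max (\<kappa> + \<beta> * real (n - 1)) (1 / 2))"
  have \<gamma>: "0 < \<gamma>" "\<gamma> < 1" "\<kappa> + \<beta> * real (n - 1) \<le> \<gamma> ^ n"
    using rate \<open>n \<ge> 1\<close> unfolding \<gamma>_def by (auto simp: real_root_lt_1_iff real_root_pow_pos2)
  have "0 \<le> c"
    using init[of 0] nonneg[of 0] by simp
  have bound: "e (int k) \<le> c * \<gamma> ^ k" for k
    using delayed_recursion_geometric_bound[OF assms(1-3) \<open>0 \<le> c\<close> \<gamma>(1) _ \<gamma>(3) init rec, of "int k"] \<gamma>(2)
    by simp
  have "(\<lambda>k. c * \<gamma> ^ k) \<longlonglongrightarrow> 0"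
    using \<gamma> by (intro tendsto_mult_right_zero LIMSEQ_power_zero) auto
  from tendsto_sandwich[OF _ _ tendsto_const this] show ?thesis
    by (simp add: nonneg bound)
qed

lemma cyclic_lag_involution: "l < n \<Longrightarrow> nat ((t - (t - int l) mod int n) mod int n) = l"
  by (simp add: mod_diff_right_eq)

lemma sum_tslice_cyclic_lags:
  assumes "n \<ge> 1" "k < n"
  shows "(\<Sum>l<n. tslice A (nat ((t - int l) mod int n)) i r k) = A i r k"
proof -
  have "bij_betw (\<lambda>l. nat ((t - int l) mod int n)) {..<n} {..<n}"
    by (rule bij_betw_byWitness[where f' = "\<lambda>l. nat ((t - int l) mod int n)"])
      (use assms in \<open>auto simp: cyclic_lag_involution nat_less_iff\<close>)
  then have "(\<Sum>l<n. tslice A (nat ((t - int l) mod int n)) i r k) = (\<Sum>s<n. tslice A s i r k)"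
    using sum.reindex_bij_betw[of _ "{..<n}" "{..<n}" "\<lambda>s. tslice A s i r k"] by simp
  also have "\<dots> = A i r k"
    using assms unfolding tslice_def by simp
  finally show ?thesis .
qed

lemma cyclic_lag_neq:
  assumes "l \<in> {1..<n}"
  shows "nat ((t - int l) mod int n) \<noteq> nat (t mod int n)"
proof
  assume "nat ((t - int l) mod int n) = nat (t mod int n)"
  then have "(t - int l) mod int n = t mod int n"
    using assms by (simp add: eq_nat_nat_iff)
  then have "(t - (t - int l)) mod int n = (t - t) mod int n"
    by (metis mod_diff_right_eq)
  with assms show False by simp
qed

locale cyclic_slice_descent =
  fixes n1 n2 n3 n :: nat and A B Xs :: tensor and \<alpha> :: real and X :: "int \<Rightarrow> tensor"
  assumes n2_pos: "n2 \<ge> 1" and n_pos: "n \<ge> 1"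
    and sol: "teq n1 n3 n (tprod n2 n A Xs) B"
    and alpha_pos: "\<alpha> > 0"
    and init: "\<And>t. t \<le> 0 \<Longrightarrow> X t = tzero"
    and step: "\<And>t. t \<ge> 0 \<Longrightarrow>
       X (t + 1) = tadd (X t) (tscale \<alpha> (tprod n1 n (ttrans n (tslice A (nat (t mod int n))))
          (tsub B (\<lambda>i j k. \<Sum>l<n. tprod n2 n (tslice A (nat ((t - int l) mod int n))) (X (t - int l)) i j k))))"
begin

abbreviation slice_at :: "int \<Rightarrow> nat" where
  "slice_at t \<equiv> nat (t mod int n)"

definition diag_factor :: "nat \<Rightarrow> tensor" where
  "diag_factor i = tsub tident (tscale \<alpha> (tprod n1 n (ttrans n (tslice A i)) (tslice A i)))"

definition cross_factor :: "nat \<Rightarrow> nat \<Rightarrow> tensor" where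
  "cross_factor i j = tprod n1 n (ttrans n (tslice A i)) (tslice A j)"

definition kappa :: real where
  "kappa = Max {topnorm n2 n2 n (diag_factor i) | i. i < n}"

definition mu :: real where
  "mu = Max {topnorm n2 n2 n (cross_factor i j) | i j. i < n \<and> j < n \<and> i \<noteq> j}"

definition error :: "int \<Rightarrow> tensor" where
  "error t = tsub (X t) Xs"

definition residual :: "int \<Rightarrow> tensor" where
  "residual t = tsub B (\<lambda>i j k. \<Sum>l<n. tprod n2 n (tslice A (slice_at (t - int l))) (X (t - int l)) i j k)"

lemma slice_at_less: "slice_at t < n"
  using n_pos by (simp add: nat_less_iff)

lemma topnorm_diag_factor_le_kappa: "i < n \<Longrightarrow> topnorm n2 n2 n (diag_factor i) \<le> kappa"
  unfolding kappa_def by (intro Max_ge finite_image_set) blast+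

lemma topnorm_cross_factor_le_mu:
  assumes "i < n" "j < n" "i \<noteq> j"
  shows "topnorm n2 n2 n (cross_factor i j) \<le> mu"
proof -
  have "{topnorm n2 n2 n (cross_factor i j) | i j. i < n \<and> j < n \<and> i \<noteq> j}
      \<subseteq> (\<lambda>(i, j). topnorm n2 n2 n (cross_factor i j)) ` ({..<n} \<times> {..<n})"
    by auto
  then have "finite {topnorm n2 n2 n (cross_factor i j) | i j. i < n \<and> j < n \<and> i \<noteq> j}"
    by (rule finite_subset) simp
  then show ?thesis
    unfolding mu_def using assms by (intro Max_ge) blast+
qed

lemma kappa_nonneg: "0 \<le> kappa"
  using n_pos order_trans[OF topnorm_nonneg[OF n2_pos n_pos] topnorm_diag_factor_le_kappa[of 0]] by simp

lemma residual_eq_sum_error: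
  assumes "r < n1" "j < n3" "q < n"
  shows "residual t r j q = - (\<Sum>l<n. tprod n2 n (tslice A (slice_at (t - int l))) (error (t - int l)) r j q)"
proof -
  have "B r j q = tprod n2 n A Xs r j q"
    using sol assms unfolding teq_def by simp
  also have "\<dots> = tprod n2 n (\<lambda>i r k. \<Sum>l<n. tslice A (slice_at (t - int l)) i r k) Xs r j q"
    by (intro tprod_cong_left) (simp add: sum_tslice_cyclic_lags n_pos)
  also have "\<dots> = (\<Sum>l<n. tprod n2 n (tslice A (slice_at (t - int l))) Xs r j q)"
    by (simp add: tprod_sum_left)
  finally show ?thesis
    unfolding residual_def error_def tprod_diff_right unfolding tsub_def by (simp add: sum_subtractf)
qed

lemma error_step:
  assumes "t \<ge> 0" "i < n2" "j < n3" "p < n"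
  shows "error (t + 1) i j p = tprod n2 n (diag_factor (slice_at t)) (error t) i j p
    - \<alpha> * (\<Sum>l\<in>{1..<n}. tprod n2 n (cross_factor (slice_at t) (slice_at (t - int l))) (error (t - int l)) i j p)"
proof -
  let ?T = "ttrans n (tslice A (slice_at t))"
  let ?F = "\<lambda>l. tprod n2 n (cross_factor (slice_at t) (slice_at (t - int l))) (error (t - int l)) i j p"
  have "tprod n1 n ?T (residual t) i j p
      = tprod n1 n ?T (tscale (-1) (\<lambda>i j k. \<Sum>l<n. tprod n2 n (tslice A (slice_at (t - int l))) (error (t - int l)) i j k)) i j p"
    using assms by (intro tprod_cong_right) (simp add: residual_eq_sum_error tscale_def)
  also have "\<dots> = - (\<Sum>l<n. ?F l)"
    unfolding tprod_scale_right tprod_sum_right tprod_assoc cross_factor_def by (simp add: tscale_def sum_negf)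
  also have "\<dots> = - (?F 0 + (\<Sum>l\<in>{1..<n}. ?F l))"
    using n_pos by (simp add: lessThan_atLeast0 sum.atLeast_Suc_lessThan)
  finally have correction: "tprod n1 n ?T (residual t) i j p = - (?F 0 + (\<Sum>l\<in>{1..<n}. ?F l))" .
  have diag: "error t i j p - \<alpha> * ?F 0 = tprod n2 n (diag_factor (slice_at t)) (error t) i j p"
    using assms unfolding diag_factor_def cross_factor_def tprod_diff_left tprod_scale_left
    by (simp add: tsub_def tscale_def tprod_tident_left)
  have "error (t + 1) i j p = error t i j p + \<alpha> * tprod n1 n ?T (residual t) i j p"
    unfolding error_def step[OF assms(1), folded residual_def] by (simp add: tadd_def tsub_def tscale_def)
  also have "\<dots> = (error t i j p - \<alpha> * ?F 0) - \<alpha> * (\<Sum>l\<in>{1..<n}. ?F l)"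
    unfolding correction by (simp add: algebra_simps)
  finally show ?thesis
    unfolding diag .
qed

lemma error_norm_step:
  assumes "t \<ge> 0"
  shows "frob n2 n3 n (error (t + 1))
    \<le> kappa * frob n2 n3 n (error t) + \<alpha> * mu * (\<Sum>l\<in>{1..<n}. frob n2 n3 n (error (t - int l)))"
proof -
  let ?C = "\<lambda>l. cross_factor (slice_at t) (slice_at (t - int l))"
  let ?S = "\<lambda>i j p. \<Sum>l\<in>{1..<n}. tprod n2 n (?C l) (error (t - int l)) i j p"
  have diag: "frob n2 n3 n (tprod n2 n (diag_factor (slice_at t)) (error t)) \<le> kappa * frob n2 n3 n (error t)"
  proof -
    have "frob n2 n3 n (tprod n2 n (diag_factor (slice_at t)) (error t))
        \<le> topnorm n2 n2 n (diag_factor (slice_at t)) * frob n2 n3 n (error t)"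
      by (rule frob_tprod_le_topnorm[OF n2_pos n_pos])
    also have "\<dots> \<le> kappa * frob n2 n3 n (error t)"
      by (intro mult_right_mono topnorm_diag_factor_le_kappa slice_at_less frob_nonneg)
    finally show ?thesis .
  qed
  have cross: "frob n2 n3 n ?S \<le> (\<Sum>l\<in>{1..<n}. mu * frob n2 n3 n (error (t - int l)))"
  proof -
    have "frob n2 n3 n ?S \<le> (\<Sum>l\<in>{1..<n}. frob n2 n3 n (tprod n2 n (?C l) (error (t - int l))))"
      by (rule frob_sum_le) simp
    also have "\<dots> \<le> (\<Sum>l\<in>{1..<n}. topnorm n2 n2 n (?C l) * frob n2 n3 n (error (t - int l)))"
      by (intro sum_mono frob_tprod_le_topnorm n2_pos n_pos)
    also have "\<dots> \<le> (\<Sum>l\<in>{1..<n}. mu * frob n2 n3 n (error (t - int l)))"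
      by (intro sum_mono mult_right_mono topnorm_cross_factor_le_mu slice_at_less frob_nonneg)
        (simp add: cyclic_lag_neq[symmetric])
    finally show ?thesis .
  qed
  have "frob n2 n3 n (error (t + 1))
      = frob n2 n3 n (\<lambda>i j p. tprod n2 n (diag_factor (slice_at t)) (error t) i j p - \<alpha> * ?S i j p)"
    using assms by (intro frob_cong) (simp add: error_step)
  also have "\<dots> \<le> frob n2 n3 n (tprod n2 n (diag_factor (slice_at t)) (error t))
      + frob n2 n3 n (\<lambda>i j p. \<alpha> * ?S i j p)"
    by (rule frob_diff_le)
  also have "\<dots> = frob n2 n3 n (tprod n2 n (diag_factor (slice_at t)) (error t))
      + \<alpha> * frob n2 n3 n ?S"
    using alpha_pos by (simp add: frob_scale)
  also have "\<dots> \<le> kappa * frob n2 n3 n (error t)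
      + \<alpha> * (\<Sum>l\<in>{1..<n}. mu * frob n2 n3 n (error (t - int l)))"
    using alpha_pos by (intro add_mono diag mult_left_mono cross) simp
  finally show ?thesis
    by (simp add: sum_distrib_left mult.assoc)
qed

text \<open>For \<open>n = 1\<close> the set defining \<open>mu\<close> is empty and \<open>mu\<close> is an unspecified value,
  so the delay coefficient is built from its positive part.\<close>

lemma error_tendsto_zero:
  assumes "kappa + \<alpha> * mu * real (n - 1) < 1"
  shows "(\<lambda>t. frob n2 n3 n (error (int t))) \<longlonglongrightarrow> 0"
proof -
  define \<beta> where "\<beta> = \<alpha> * max mu 0"
  have rate: "kappa + \<beta> * real (n - 1) < 1"
  proof (cases "n = 1")
    case True
    then show ?thesis using assms by simp
  next
    case False
    then have "0 \<le> mu"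
      using n_pos order_trans[OF topnorm_nonneg[OF n2_pos n_pos] topnorm_cross_factor_le_mu[of 0 1]] by simp
    then show ?thesis using assms by (simp add: \<beta>_def)
  qed
  have rec: "frob n2 n3 n (error (t + 1))
      \<le> kappa * frob n2 n3 n (error t) + \<beta> * (\<Sum>l\<in>{1..<n}. frob n2 n3 n (error (t - int l)))"
    if "t \<ge> 0" for t
  proof -
    have "\<alpha> * mu \<le> \<beta>"
      using alpha_pos by (simp add: \<beta>_def)
    then have "\<alpha> * mu * (\<Sum>l\<in>{1..<n}. frob n2 n3 n (error (t - int l)))
        \<le> \<beta> * (\<Sum>l\<in>{1..<n}. frob n2 n3 n (error (t - int l)))"
      by (intro mult_right_mono sum_nonneg frob_nonneg)
    with error_norm_step[OF that] show ?thesis by linarith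
  qed
  show ?thesis
  proof (rule delayed_recursion_tendsto_zero[OF n_pos kappa_nonneg _ rate frob_nonneg _ rec])
    show "0 \<le> \<beta>" using alpha_pos by (simp add: \<beta>_def)
    show "frob n2 n3 n (error t) \<le> frob n2 n3 n (error 0)" if "t \<le> 0" for t
      using init[OF that] init[of 0] by (simp add: error_def)
  qed
qed

end

theorem theorem1:
  fixes n1 n2 n3 n :: nat and A B Xs :: tensor and \<alpha> :: real
    and X :: "int \<Rightarrow> tensor"
  assumes dims: "n1 \<ge> 1" "n2 \<ge> 1" "n3 \<ge> 1" "n \<ge> 1"
    and sol: "teq n1 n3 n (tprod n2 n A Xs) B"
    and uniq: "\<And>Y. teq n1 n3 n (tprod n2 n A Y) B \<Longrightarrow> teq n2 n3 n Y Xs"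
    and alpha: "\<alpha> > 0"
    and init: "\<And>t. t \<le> 0 \<Longrightarrow> X t = tzero"
    and step: "\<And>t. t \<ge> 0 \<Longrightarrow>
       X (t + 1) = tadd (X t) (tscale \<alpha> (tprod n1 n (ttrans n (tslice A (nat (t mod int n))))
          (tsub B (\<lambda>i j k. \<Sum>l<n. tprod n2 n (tslice A (nat ((t - int l) mod int n))) (X (t - int l)) i j k))))"
    and contr: "Max {topnorm n2 n2 n (tsub tident (tscale \<alpha> (tprod n1 n (ttrans n (tslice A i)) (tslice A i)))) | i. i < n}
       + \<alpha> * Max {topnorm n2 n2 n (tprod n1 n (ttrans n (tslice A i)) (tslice A j)) | i j. i < n \<and> j < n \<and> i \<noteq> j}
         * real (n - 1) < 1"
  shows "(\<lambda>t::nat. (frob n2 n3 n (tsub (X (int t)) Xs))\<^sup>2) \<longlonglongrightarrow> 0"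
proof -
  interpret cyclic_slice_descent n1 n2 n3 n A B Xs \<alpha> X
    using dims sol alpha init step by unfold_locales auto
  have "(\<lambda>t. frob n2 n3 n (error (int t))) \<longlonglongrightarrow> 0"
    by (rule error_tendsto_zero) (use contr in \<open>simp add: kappa_def mu_def diag_factor_def cross_factor_def\<close>)
  from tendsto_power[OF this, of 2] show ?thesis
    by (simp add: error_def)
qed

end
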